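(* Assume (A1)–(A3) and $\mu_u,\mu_v>0$, and write $u^*=w^*(\mu_u,p)$, $v^*=w^*(\mu_v,q)$. Then $$\lambda_1(\mu_u,p-cv^* )\sum_{i=1}^n\alpha_i(u_i^* )^2+c^3\lambda_1(\mu_v,q-bu^* )\sum_{i=1}^n\alpha_i(v_i^* )^2\le-\sum_{i=1}^n\alpha_i(cv_i^*-u_i^* )^2(cv_i^*+u_i^* )\le 0,$$ and if equality holds throughout then $u^*=cv^*$ and $bc=1$. In particular, $\lambda_1(\mu_v,q-bu^* )$ and $\lambda_1(\mu_u,p-cv^* )$ cannot both be $\ge 0$ unless both equal $0$, $bc=1$ and $u^*=cv^*$.
   Context: Let $n\ge2$ and $A=(a_{ij})_{n\times n}$ with $a_{ij}\ge0$ for $i\ne j$. The connection matrix $L$ has $L_{ij}=a_{ij}$ for $i\ne j$, $L_{ii}=-\sum_{k\ne i}a_{ki}$. The weighted digraph $\mathcal G$ associated with $A$ has vertices $\{1,\dots,n\}$ and, for $i\ne j$, an arc $(i,j)$ iff $a_{ji}>0$, with weight $a_{ji}$. A cycle is a list of distinct vertices $i_1,\dots,i_k$, $k\ge2$, with arcs $(i_m,i_{m+1})$, $m<k$, and $(i_k,i_1)$; its weight is the product of its arc weights; its reverse has all arcs reversed. $\mathcal G$ is cycle-balanced if for every cycle its reverse is also a cycle of $\mathcal G$ with the same weight. Assumptions: (A1) $b,c>0$, $bc\le1$, $p_i,q_i>0$; (A2) $L$ irreducible; (A3) $\mathcal G$ cycle-balanced. $\mathcal L$ is the matrix with $\mathcal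 L_{ij}=-a_{ij}$ ($i\ne j$), $\mathcal L_{ii}=\sum_{k\ne i}a_{ik}$, and $\alpha_i>0$ is the cofactor of its $i$-th diagonal entry. For $\mu>0$, $r\gg0$, $w^*(\mu,r)\gg0$ is the unique positive equilibrium of $w_i'=\mu\sum_jL_{ij}w_j+w_i(r_i-w_i)$. For $h\in\mathbb R^n$, $\lambda_1(\mu,h)=-s(\mu L+\mathrm{diag}(h_i))$, $s$ denoting the spectral bound (maximal real part of eigenvalues). *)

theory Defs
  imports "Jordan_Normal_Form.Determinant" "Jordan_Normal_Form.Char_Poly"
begin

text \<open>Vertices/indices are 0..n-1. A is an n x n real matrix (only off-diagonal entries used).\<close>

definition conn_matrix :: "nat \<Rightarrow> real mat \<Rightarrow> real mat" where
  "conn_matrix n A = mat n n (\<lambda>(i,j). if i = j then - (\<Sum>k\<in>{0..<n} - {i}. A $$ (k,i)) else A $$ (i,j))"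

definition calL_matrix :: "nat \<Rightarrow> real mat \<Rightarrow> real mat" where
  "calL_matrix n A = mat n n (\<lambda>(i,j). if i = j then (\<Sum>k\<in>{0..<n} - {i}. A $$ (i,k)) else - A $$ (i,j))"

definition alpha :: "nat \<Rightarrow> real mat \<Rightarrow> nat \<Rightarrow> real" where
  "alpha n A i = (-1) ^ (i + i) * det (mat_delete (calL_matrix n A) i i)"

text \<open>Irreducibility of an n x n matrix: no nonempty proper index subset S with M_ij = 0
  for all i in S, j not in S (i.e. it cannot be permuted to block triangular form).\<close>
definition irreducible_mat :: "nat \<Rightarrow> real mat \<Rightarrow> bool" where
  "irreducible_mat n M \<longleftrightarrow>
     (\<forall>S. S \<subseteq> {0..<n} \<and> S \<noteq> {} \<and> S \<noteq> {0..<n} \<longrightarrow>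
        (\<exists>i\<in>S. \<exists>j\<in>{0..<n} - S. M $$ (i,j) \<noteq> 0))"

text \<open>Digraph G associated with A: arc (i,j) iff i \<noteq> j and a_ji > 0, with weight a_ji.\<close>
definition arc :: "nat \<Rightarrow> real mat \<Rightarrow> nat \<Rightarrow> nat \<Rightarrow> bool" where
  "arc n A i j \<longleftrightarrow> i < n \<and> j < n \<and> i \<noteq> j \<and> A $$ (j,i) > 0"

definition is_cycle :: "nat \<Rightarrow> real mat \<Rightarrow> nat list \<Rightarrow> bool" where
  "is_cycle n A cs \<longleftrightarrow> length cs \<ge> 2 \<and> distinct cs \<and>
     (\<forall>m < length cs. arc n A (cs ! m) (cs ! ((m + 1) mod length cs)))"

definition cycle_weight :: "real mat \<Rightarrow> nat list \<Rightarrow> real" where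
  "cycle_weight A cs = (\<Prod>m<length cs. A $$ (cs ! ((m + 1) mod length cs), cs ! m))"

definition cycle_balanced :: "nat \<Rightarrow> real mat \<Rightarrow> bool" where
  "cycle_balanced n A \<longleftrightarrow>
     (\<forall>cs. is_cycle n A cs \<longrightarrow> is_cycle n A (rev cs) \<and> cycle_weight A (rev cs) = cycle_weight A cs)"

definition spectral_bound :: "real mat \<Rightarrow> real" where
  "spectral_bound M = Max (Re ` {z. eigenvalue (map_mat complex_of_real M) z})"

definition lambda1 :: "nat \<Rightarrow> real mat \<Rightarrow> real \<Rightarrow> (nat \<Rightarrow> real) \<Rightarrow> real" where
  "lambda1 n A \<mu> h = - spectral_bound
      (mat n n (\<lambda>(i,j). \<mu> * conn_matrix n A $$ (i,j) + (if i = j then h i else 0)))"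

text \<open>w is a positive equilibrium of w_i' = \<mu> \<Sum>_j L_ij w_j + w_i (r_i - w_i).\<close>
definition pos_equilibrium :: "nat \<Rightarrow> real mat \<Rightarrow> real \<Rightarrow> (nat \<Rightarrow> real) \<Rightarrow> (nat \<Rightarrow> real) \<Rightarrow> bool" where
  "pos_equilibrium n A \<mu> r w \<longleftrightarrow>
     (\<forall>i<n. w i > 0) \<and>
     (\<forall>i<n. \<mu> * (\<Sum>j<n. conn_matrix n A $$ (i,j) * w j) + w i * (r i - w i) = 0)"

end

theory Submission
  imports Defs
begin

text \<open>Cycle balance makes the network reversible. By Kolmogorov's criterion the products of
  the ratios a_ij / a_ji along walks from a fixed vertex define a positive potential in detailed
  balance with A, and the diagonal cofactors alpha of the Laplacian are a positive multiple of
  it: the adjugate of the singular Laplacian has constant columns by a maximum principle, so alpha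
  spans its left kernel, which detailed balance identifies with the potential. Consequently
  mu L + diag h is symmetric for the alpha-weighted inner product, and lambda1 is bounded above by
  the corresponding Rayleigh quotient. Testing lambda1(mu_u, p - c v) with u and lambda1(mu_v,
  q - b u) with v and using the equilibrium equations bounds the left-hand side by
  sum alpha_i (u_i^2 (c v_i - u_i) + c^3 v_i^2 (b u_i - v_i)), which equals
  - sum alpha_i (c v_i - u_i)^2 (c v_i + u_i) - (1 - bc) sum alpha_i c^2 v_i^2 u_i.\<close>

section \<open>Quadratic forms and the Rayleigh quotient\<close>

definition bilin_form :: "nat \<Rightarrow> (nat \<Rightarrow> nat \<Rightarrow> real) \<Rightarrow> (nat \<Rightarrow> real) \<Rightarrow> (nat \<Rightarrow> real) \<Rightarrow> real" where
  "bilin_form n S a b = (\<Sum>i<n. \<Sum>j<n. a i * S i j * b j)"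

definition sq_norm :: "nat \<Rightarrow> (nat \<Rightarrow> real) \<Rightarrow> real" where
  "sq_norm n y = (\<Sum>i<n. (y i)\<^sup>2)"

lemma sum_if_eq_mult:
  "(\<Sum>j<(n::nat). (if i = j then t else 0) * (f j :: real)) = (if i < n then t * f i else 0)"
proof -
  have "(\<Sum>j<n. (if i = j then t else 0) * f j) = (\<Sum>j<n. (if i = j then t * f i else 0))"
    by (intro sum.cong) auto
  then show ?thesis by (simp add: sum.delta')
qed

lemma sq_norm_nonneg: "sq_norm n y \<ge> 0"
  unfolding sq_norm_def by (intro sum_nonneg) auto

lemma sq_component_le_sq_norm: "i < n \<Longrightarrow> (y i)\<^sup>2 \<le> sq_norm n y"
  unfolding sq_norm_def by (intro member_le_sum) auto

lemma sq_norm_conv_sum_mult: "sq_norm n y = (\<Sum>i<n. y i * y i)"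
  unfolding sq_norm_def by (simp add: power2_eq_square)

lemma bilin_form_commute:
  assumes "\<forall>i<n. \<forall>j<n. S i j = S j i"
  shows "bilin_form n S a b = bilin_form n S b a"
proof -
  have "bilin_form n S a b = (\<Sum>j<n. \<Sum>i<n. a i * S i j * b j)"
    unfolding bilin_form_def by (rule sum.swap)
  also have "\<dots> = bilin_form n S b a" unfolding bilin_form_def
    by (intro sum.cong refl) (use assms in \<open>auto simp: mult.commute mult.left_commute\<close>)
  finally show ?thesis .
qed

lemma bilin_form_add_scaled:
  assumes "\<forall>i<n. \<forall>j<n. S i j = S j i"
  shows "bilin_form n S (\<lambda>i. a i + s * b i) (\<lambda>i. a i + s * b i)
       = bilin_form n S a a + 2 * s * bilin_form n S a b + s\<^sup>2 * bilin_form n S b b"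
proof -
  have "bilin_form n S (\<lambda>i. a i + s * b i) (\<lambda>i. a i + s * b i)
      = bilin_form n S a a + s * bilin_form n S a b + s * bilin_form n S b a + s\<^sup>2 * bilin_form n S b b"
    unfolding bilin_form_def
    by (simp add: algebra_simps sum.distrib sum_distrib_left power2_eq_square)
  then show ?thesis using bilin_form_commute[OF assms, of a b] by simp
qed

lemma bilin_form_cauchy_schwarz:
  assumes sym: "\<forall>i<n. \<forall>j<n. S i j = S j i" and psd: "\<forall>y. bilin_form n S y y \<ge> 0"
  shows "(bilin_form n S a b)\<^sup>2 \<le> bilin_form n S a a * bilin_form n S b b"
proof (cases "bilin_form n S b b = 0")
  case True
  have "bilin_form n S a b = 0"
  proof (rule ccontr)
    assume ne: "bilin_form n S a b \<noteq> 0"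
    define s where "s = - (bilin_form n S a a + 1) / (2 * bilin_form n S a b)"
    have "0 \<le> bilin_form n S (\<lambda>i. a i + s * b i) (\<lambda>i. a i + s * b i)" using psd by blast
    also have "\<dots> = bilin_form n S a a + 2 * s * bilin_form n S a b"
      using bilin_form_add_scaled[OF sym] True by simp
    also have "\<dots> = -1" using ne unfolding s_def by (simp add: field_simps)
    finally show False by simp
  qed
  then show ?thesis using True by simp
next
  case False
  then have pos: "bilin_form n S b b > 0" using psd by (metis less_eq_real_def)
  define s where "s = - bilin_form n S a b / bilin_form n S b b"
  have "0 \<le> bilin_form n S (\<lambda>i. a i + s * b i) (\<lambda>i. a i + s * b i)" using psd by blast
  also have "\<dots> = bilin_form n S a a + 2 * s * bilin_form n S a b + s\<^sup>2 * bilin_form n S b b"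
    using bilin_form_add_scaled[OF sym] by simp
  also have "\<dots> = bilin_form n S a a - (bilin_form n S a b)\<^sup>2 / bilin_form n S b b"
    using pos unfolding s_def by (simp add: field_simps power2_eq_square)
  finally have "(bilin_form n S a b)\<^sup>2 / bilin_form n S b b \<le> bilin_form n S a a" by simp
  then show ?thesis using pos by (simp add: field_simps)
qed

lemma abs_mult_le_sq_norm:
  assumes "i < n" "j < n"
  shows "\<bar>y i * y j\<bar> \<le> sq_norm n y"
proof -
  have "2 * \<bar>y i * y j\<bar> \<le> (y i)\<^sup>2 + (y j)\<^sup>2"
    using sum_squares_bound[of "\<bar>y i\<bar>" "\<bar>y j\<bar>"] by (simp add: abs_mult)
  then show ?thesis using sq_component_le_sq_norm[of i n y] sq_component_le_sq_norm[of j n y] assms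
    by linarith
qed

lemma bilin_form_le_sq_norm:
  "bilin_form n S y y \<le> (\<Sum>i<n. \<Sum>j<n. \<bar>S i j\<bar>) * sq_norm n y"
proof -
  have "bilin_form n S y y \<le> (\<Sum>i<n. \<Sum>j<n. \<bar>S i j\<bar> * sq_norm n y)"
    unfolding bilin_form_def
  proof (intro sum_mono)
    fix i j assume "i \<in> {..<n}" "j \<in> {..<n}"
    then have "\<bar>S i j\<bar> * \<bar>y i * y j\<bar> \<le> \<bar>S i j\<bar> * sq_norm n y"
      by (intro mult_left_mono abs_mult_le_sq_norm) auto
    moreover have "y i * S i j * y j \<le> \<bar>S i j\<bar> * \<bar>y i * y j\<bar>"
      by (metis abs_ge_self abs_mult mult.commute mult.left_commute)
    ultimately show "y i * S i j * y j \<le> \<bar>S i j\<bar> * sq_norm n y" by linarith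
  qed
  also have "\<dots> = (\<Sum>i<n. \<Sum>j<n. \<bar>S i j\<bar>) * sq_norm n y"
    by (simp add: sum_distrib_right)
  finally show ?thesis .
qed

lemma bilin_form_diag_diff:
  "bilin_form n (\<lambda>i j. (if i = j then t else 0) - S i j) a b = t * (\<Sum>i<n. a i * b i) - bilin_form n S a b"
proof -
  have "(\<Sum>j<n. a i * ((if i = j then t else 0) - S i j) * b j)
      = a i * t * b i - (\<Sum>j<n. a i * S i j * b j)" if "i < n" for i
    using that sum_if_eq_mult[of i t "\<lambda>j. a i * b j" n]
    by (simp add: algebra_simps sum_subtractf)
  then show ?thesis
    unfolding bilin_form_def by (simp add: sum_subtractf sum_distrib_left mult_ac)
qed

lemma right_inverse_if_trivial_kernel:
  fixes Q :: "nat \<Rightarrow> nat \<Rightarrow> real"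
  assumes "\<not> (\<exists>w. (\<exists>i<n. w i \<noteq> 0) \<and> (\<forall>i<n. (\<Sum>j<n. Q i j * w j) = 0))"
  shows "\<exists>R. \<forall>i<n. \<forall>j<n. (\<Sum>k<n. Q i k * R k j) = (if i = j then 1 else 0)"
proof -
  define Qm where "Qm = mat n n (\<lambda>(i,j). Q i j)"
  have Qc: "Qm \<in> carrier_mat n n" unfolding Qm_def by simp
  have "det Qm \<noteq> 0"
  proof
    assume "det Qm = 0"
    then obtain v where v: "v \<in> carrier_vec n" "v \<noteq> 0\<^sub>v n" "Qm *\<^sub>v v = 0\<^sub>v n"
      using det_0_iff_vec_prod_zero[OF Qc] by blast
    have "(\<Sum>j<n. Q i j * v $ j) = 0" if i: "i < n" for i
    proof -
      have "(Qm *\<^sub>v v) $ i = 0" using v i by simp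
      then show ?thesis using i v by (simp add: Qm_def scalar_prod_def lessThan_atLeast0)
    qed
    moreover have "\<exists>i<n. v $ i \<noteq> 0" using v by (auto simp: vec_eq_iff)
    ultimately show False using assms by blast
  qed
  from det_non_zero_imp_unit[OF Qc this, of "()"]
  obtain B where B: "B \<in> carrier_mat n n" "Qm * B = 1\<^sub>m n"
    unfolding Units_def ring_mat_def by auto
  show ?thesis
  proof (intro exI allI impI)
    fix i j assume ij: "i < n" "j < n"
    have "(Qm * B) $$ (i,j) = (if i = j then 1 else 0)" using B ij by simp
    then show "(\<Sum>k<n. Q i k * B $$ (k,j)) = (if i = j then 1 else 0)"
      using B ij by (simp add: Qm_def scalar_prod_def lessThan_atLeast0)
  qed
qed

text \<open>Cauchy-Schwarz applied to y and its preimage z = R y under Q.\<close>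

lemma sq_norm_le_form_if_right_inverse:
  fixes Q R :: "nat \<Rightarrow> nat \<Rightarrow> real"
  assumes sym: "\<forall>i<n. \<forall>j<n. Q i j = Q j i" and psd: "\<forall>y. bilin_form n Q y y \<ge> 0"
    and R: "\<forall>i<n. \<forall>j<n. (\<Sum>k<n. Q i k * R k j) = (if i = j then 1 else 0)"
  shows "sq_norm n y \<le> (\<Sum>i<n. \<Sum>j<n. \<bar>R i j\<bar>) * bilin_form n Q y y"
proof (cases "sq_norm n y = 0")
  case True then show ?thesis using psd by (simp add: sum_nonneg)
next
  case False
  then have p: "sq_norm n y > 0" using sq_norm_nonneg[of n y] by simp
  define K where "K = (\<Sum>i<n. \<Sum>j<n. \<bar>R i j\<bar>)"
  define z where "z = (\<lambda>i. \<Sum>j<n. R i j * y j)"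
  have Qz: "(\<Sum>k<n. Q i k * z k) = y i" if i: "i < n" for i
  proof -
    have "(\<Sum>k<n. Q i k * z k) = (\<Sum>k<n. \<Sum>j<n. Q i k * R k j * y j)"
      unfolding z_def by (simp add: sum_distrib_left mult.assoc)
    also have "\<dots> = (\<Sum>j<n. (\<Sum>k<n. Q i k * R k j) * y j)"
      by (subst sum.swap) (simp add: sum_distrib_right)
    also have "\<dots> = (\<Sum>j<n. (if i = j then y j else 0))"
      using R i by (intro sum.cong) auto
    finally show ?thesis using i by simp
  qed
  have yz: "bilin_form n Q y z = sq_norm n y"
    unfolding sq_norm_conv_sum_mult bilin_form_def
    by (intro sum.cong refl) (simp add: Qz mult.assoc flip: sum_distrib_left)
  have "bilin_form n Q z z = (\<Sum>i<n. z i * y i)"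
    unfolding bilin_form_def by (intro sum.cong refl) (simp add: Qz mult.assoc flip: sum_distrib_left)
  also have "\<dots> = bilin_form n R y y" unfolding bilin_form_def z_def
    by (intro sum.cong refl) (simp add: sum_distrib_left mult_ac)
  finally have zz: "bilin_form n Q z z \<le> K * sq_norm n y"
    using bilin_form_le_sq_norm[of n R y] unfolding K_def by simp
  have "(sq_norm n y)\<^sup>2 \<le> bilin_form n Q y y * bilin_form n Q z z"
    using bilin_form_cauchy_schwarz[OF sym psd, of y z] yz by simp
  also have "\<dots> \<le> bilin_form n Q y y * (K * sq_norm n y)"
    using zz psd by (intro mult_left_mono) auto
  finally have "sq_norm n y * sq_norm n y \<le> (K * bilin_form n Q y y) * sq_norm n y"
    by (simp only: power2_eq_square mult_ac)
  then show ?thesis using p unfolding K_def by (rule mult_right_le_imp_le)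
qed

lemma psd_form_coercive:
  fixes Q :: "nat \<Rightarrow> nat \<Rightarrow> real"
  assumes sym: "\<forall>i<n. \<forall>j<n. Q i j = Q j i" and psd: "\<forall>y. bilin_form n Q y y \<ge> 0"
    and kernel: "\<not> (\<exists>w. (\<exists>i<n. w i \<noteq> 0) \<and> (\<forall>i<n. (\<Sum>j<n. Q i j * w j) = 0))"
  shows "\<exists>e>0. \<forall>y. e * sq_norm n y \<le> bilin_form n Q y y"
proof -
  obtain R where R: "\<forall>i<n. \<forall>j<n. (\<Sum>k<n. Q i k * R k j) = (if i = j then 1 else 0)"
    using right_inverse_if_trivial_kernel[OF kernel] by blast
  define K where "K = (\<Sum>i<n. \<Sum>j<n. \<bar>R i j\<bar>)"
  have K0: "K \<ge> 0" unfolding K_def by (intro sum_nonneg) auto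
  show ?thesis
  proof (intro exI conjI allI)
    show "1 / (K + 1) > 0" using K0 by simp
    fix y
    have "sq_norm n y \<le> (K + 1) * bilin_form n Q y y"
      using sq_norm_le_form_if_right_inverse[OF sym psd R, of y] psd[rule_format, of y]
      unfolding K_def[symmetric] by (simp add: algebra_simps)
    then show "1 / (K + 1) * sq_norm n y \<le> bilin_form n Q y y"
      using K0 by (simp add: field_simps)
  qed
qed

text \<open>The least t bounding the Rayleigh quotient of S is an eigenvalue: otherwise t I - S would
  be nonsingular, hence coercive, and t could be lowered.\<close>

lemma symmetric_eigenvalue_ge_rayleigh:
  assumes sym: "\<forall>i<n. \<forall>j<n. S i j = S j i" and x: "sq_norm n x > 0"
  shows "\<exists>t w. bilin_form n S x x \<le> t * sq_norm n x \<and> (\<exists>i<n. w i \<noteq> 0) \<and>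
     (\<forall>i<n. (\<Sum>j<n. S i j * w j) = t * w i)"
proof -
  define T where "T = {t. \<forall>y. bilin_form n S y y \<le> t * sq_norm n y}"
  have "(\<Sum>i<n. \<Sum>j<n. \<bar>S i j\<bar>) \<in> T" unfolding T_def using bilin_form_le_sq_norm by blast
  then have Tne: "T \<noteq> {}" by blast
  have low: "bilin_form n S y y / sq_norm n y \<le> t" if "t \<in> T" "sq_norm n y > 0" for y t
    using that unfolding T_def by (auto simp: pos_divide_le_eq)
  have bdd: "bdd_below T" using low[OF _ x] by (auto simp: bdd_below_def)
  define t0 where "t0 = Inf T"
  have t0T: "bilin_form n S y y \<le> t0 * sq_norm n y" for y
  proof (cases "sq_norm n y = 0")
    case True
    then have "y i = 0" if "i < n" for i using sq_component_le_sq_norm[OF that, of y] by simp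
    then show ?thesis using True unfolding bilin_form_def by simp
  next
    case False
    then have p: "sq_norm n y > 0" using sq_norm_nonneg[of n y] by simp
    have "bilin_form n S y y / sq_norm n y \<le> t0"
      unfolding t0_def using low p by (intro cInf_greatest[OF Tne]) blast
    then show ?thesis using p by (simp add: pos_divide_le_eq)
  qed
  define Q where "Q = (\<lambda>i j. (if i = j then t0 else 0) - S i j)"
  have Qsym: "\<forall>i<n. \<forall>j<n. Q i j = Q j i" using sym unfolding Q_def by auto
  have Qform: "bilin_form n Q y y = t0 * sq_norm n y - bilin_form n S y y" for y
    unfolding Q_def bilin_form_diag_diff sq_norm_conv_sum_mult ..
  have Qpsd: "\<forall>y. bilin_form n Q y y \<ge> 0" using t0T by (simp add: Qform)
  show ?thesis
  proof (cases "\<exists>w. (\<exists>i<n. w i \<noteq> 0) \<and> (\<forall>i<n. (\<Sum>j<n. Q i j * w j) = 0)")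
    case True
    then obtain w where w: "\<exists>i<n. w i \<noteq> 0" "\<forall>i<n. (\<Sum>j<n. Q i j * w j) = 0" by blast
    have "(\<Sum>j<n. S i j * w j) = t0 * w i" if i: "i < n" for i
    proof -
      have "(\<Sum>j<n. Q i j * w j) = t0 * w i - (\<Sum>j<n. S i j * w j)"
        unfolding Q_def using i by (simp add: left_diff_distrib sum_subtractf sum_if_eq_mult)
      then show ?thesis using w(2) i by simp
    qed
    then show ?thesis using t0T w(1) by blast
  next
    case False
    then obtain e where e: "e > 0" "\<forall>y. e * sq_norm n y \<le> bilin_form n Q y y"
      using psd_form_coercive[OF Qsym Qpsd] by blast
    have "bilin_form n S y y \<le> (t0 - e) * sq_norm n y" for y
      using e(2)[rule_format, of y] unfolding Qform left_diff_distrib by linarith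
    then have "t0 - e \<in> T" unfolding T_def by blast
    then have "t0 \<le> t0 - e" unfolding t0_def by (rule cInf_lower[OF _ bdd])
    then show ?thesis using e(1) by simp
  qed
qed

text \<open>Conjugating by the diagonal matrix with entries sqrt (a i) makes M symmetric.\<close>

lemma reversible_eigenvalue_ge_rayleigh:
  fixes M :: "nat \<Rightarrow> nat \<Rightarrow> real" and a \<phi> :: "nat \<Rightarrow> real"
  assumes apos: "\<And>i. i < n \<Longrightarrow> a i > 0"
    and reversible: "\<And>i j. i < n \<Longrightarrow> j < n \<Longrightarrow> a i * M i j = a j * M j i"
    and \<phi>: "\<exists>i<n. \<phi> i \<noteq> 0"
  shows "\<exists>t w. (\<Sum>i<n. a i * \<phi> i * (\<Sum>j<n. M i j * \<phi> j)) \<le> t * (\<Sum>i<n. a i * (\<phi> i)\<^sup>2)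
    \<and> (\<exists>i<n. w i \<noteq> 0) \<and> (\<forall>i<n. (\<Sum>j<n. M i j * w j) = t * w i)"
proof -
  define s where "s i = sqrt (a i)" for i
  have spos: "s i > 0" and ss: "s i * s i = a i" if "i < n" for i
    unfolding s_def using apos[OF that] by simp_all
  define S where "S i j = s i * M i j / s j" for i j
  have Ssym: "\<forall>i<n. \<forall>j<n. S i j = S j i"
  proof (intro allI impI)
    fix i j assume ij: "i < n" "j < n"
    have "s i * M i j * s i = s j * M j i * s j"
      using reversible[OF ij] ss[OF ij(1)] ss[OF ij(2)] by (metis mult.assoc mult.commute)
    then show "S i j = S j i" unfolding S_def using spos[OF ij(1)] spos[OF ij(2)]
      by (simp add: field_simps)
  qed
  define x where "x i = s i * \<phi> i" for i
  have nx: "sq_norm n x = (\<Sum>i<n. a i * (\<phi> i)\<^sup>2)"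
    unfolding sq_norm_def x_def by (intro sum.cong refl) (simp add: power2_eq_square ss mult_ac flip: ss)
  obtain i0 where i0: "i0 < n" "\<phi> i0 \<noteq> 0" using \<phi> by blast
  have "sq_norm n x > 0" unfolding nx
    using i0 apos by (intro sum_pos2[where i = i0]) (auto simp: less_imp_le)
  then obtain t w where tw: "bilin_form n S x x \<le> t * sq_norm n x" "\<exists>i<n. w i \<noteq> 0"
    "\<forall>i<n. (\<Sum>j<n. S i j * w j) = t * w i"
    using symmetric_eigenvalue_ge_rayleigh[OF Ssym] by blast
  have "x i * S i j * x j = a i * \<phi> i * (M i j * \<phi> j)" if "i < n" "j < n" for i j
    unfolding x_def S_def using spos[OF that(2)] by (simp add: field_simps flip: ss[OF that(1)])
  then have "bilin_form n S x x = (\<Sum>i<n. a i * \<phi> i * (\<Sum>j<n. M i j * \<phi> j))"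
    unfolding bilin_form_def sum_distrib_left by (intro sum.cong refl) simp
  moreover have "(\<Sum>j<n. M i j * (w j / s j)) = t * (w i / s i)" if i: "i < n" for i
  proof -
    have "s i * (\<Sum>j<n. M i j * (w j / s j)) = (\<Sum>j<n. S i j * w j)"
      unfolding S_def by (simp add: sum_distrib_left mult_ac)
    then show ?thesis using tw(3) i spos[OF i] by (simp add: field_simps)
  qed
  moreover have "\<exists>i<n. w i / s i \<noteq> 0" using tw(2) spos by fastforce
  ultimately show ?thesis
    using tw(1) nx by (intro exI[of _ t] exI[of _ "\<lambda>j. w j / s j"]) auto
qed

section \<open>Spectral bound, determinants and matrix entries\<close>

lemma mat_mult_entry_sum:
  assumes "A \<in> carrier_mat n n" "B \<in> carrier_mat n n" "i < n" "j < n"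
  shows "(A * B) $$ (i,j) = (\<Sum>l<n. A $$ (i,l) * B $$ (l,j))"
  using assms by (auto simp: scalar_prod_def atLeast0LessThan intro!: sum.cong)

lemma mat_mult_vec_entry_sum:
  assumes "M \<in> carrier_mat m m" "v \<in> carrier_vec m" "i < m"
  shows "(M *\<^sub>v v) $ i = (\<Sum>j<m. M $$ (i,j) * v $ j)"
  using assms by (auto simp: scalar_prod_def atLeast0LessThan intro!: sum.cong)

lemma real_eigenvalue_le_spectral_bound:
  fixes M :: "real mat" and w :: "nat \<Rightarrow> real"
  assumes M: "M \<in> carrier_mat n n" and w0: "\<exists>i<n. w i \<noteq> 0"
    and ev: "\<forall>i<n. (\<Sum>j<n. M $$ (i,j) * w j) = t * w i"
  shows "t \<le> spectral_bound M"
proof -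
  define Mc where "Mc = map_mat complex_of_real M"
  have Mc: "Mc \<in> carrier_mat n n" unfolding Mc_def using M by simp
  define v where "v = vec n (\<lambda>i. complex_of_real (w i))"
  have "eigenvector Mc v (complex_of_real t)"
    unfolding eigenvector_def
  proof (intro conjI)
    show "v \<in> carrier_vec (dim_row Mc)" using Mc unfolding v_def by simp
    show "v \<noteq> 0\<^sub>v (dim_row Mc)" using Mc w0 unfolding v_def by (auto simp: vec_eq_iff)
    show "Mc *\<^sub>v v = complex_of_real t \<cdot>\<^sub>v v"
    proof (rule eq_vecI)
      fix i assume "i < dim_vec (complex_of_real t \<cdot>\<^sub>v v)"
      then have i: "i < n" unfolding v_def by simp
      have "(Mc *\<^sub>v v) $ i = complex_of_real (\<Sum>j<n. M $$ (i,j) * w j)"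
        using i M unfolding Mc_def v_def by (simp add: scalar_prod_def lessThan_atLeast0)
      also have "\<dots> = (complex_of_real t \<cdot>\<^sub>v v) $ i" using ev i unfolding v_def by simp
      finally show "(Mc *\<^sub>v v) $ i = (complex_of_real t \<cdot>\<^sub>v v) $ i" .
    qed (use Mc in \<open>simp add: v_def\<close>)
  qed
  then have evt: "eigenvalue Mc (complex_of_real t)" unfolding eigenvalue_def by blast
  have "char_poly Mc \<noteq> 0"
    using degree_monic_char_poly[OF Mc] by auto
  then have "finite {z. poly (char_poly Mc) z = 0}" by (rule poly_roots_finite)
  moreover have "{z. eigenvalue Mc z} = {z. poly (char_poly Mc) z = 0}"
    using eigenvalue_root_char_poly[OF Mc] by auto
  ultimately have "finite (Re ` {z. eigenvalue Mc z})" by simp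
  then have "Re (complex_of_real t) \<le> Max (Re ` {z. eigenvalue Mc z})"
    using evt by (intro Max_ge) (auto intro: rev_image_eqI)
  then show ?thesis unfolding spectral_bound_def Mc_def by simp
qed

lemma det_pos_if_shifts_nonsingular:
  fixes B :: "real mat"
  assumes B: "B \<in> carrier_mat m m" and nz: "\<And>t. t \<ge> 0 \<Longrightarrow> det (B + t \<cdot>\<^sub>m 1\<^sub>m m) \<noteq> 0"
  shows "det B > 0"
proof -
  have mB: "- B \<in> carrier_mat m m" using B by simp
  define p where "p = char_poly (- B)"
  have pv: "poly p t = det (B + t \<cdot>\<^sub>m 1\<^sub>m m)" for t
  proof -
    have "poly p t = det (- (char_matrix (- B) t))" unfolding p_def by (rule char_poly_matrix[OF mB])
    also have "- (char_matrix (- B) t) = B + t \<cdot>\<^sub>m 1\<^sub>m m"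
      unfolding char_matrix_def using B by (intro eq_matI) auto
    finally show ?thesis .
  qed
  text \<open>The characteristic polynomial is monic, so it is positive for large t; having no root
    on [0, \<infinity>) it is positive at 0 as well.\<close>
  have "lead_coeff p = 1" using degree_monic_char_poly[OF mB] unfolding p_def by simp
  then obtain N where N: "\<forall>x\<ge>N. poly p x \<ge> 1" using poly_pinfty_gt_lc[of p] by auto
  define T where "T = max N 0"
  have T: "T \<ge> 0" "poly p T \<ge> 1" using N unfolding T_def by auto
  have "poly p 0 > 0"
  proof (rule ccontr)
    assume "\<not> poly p 0 > 0"
    then obtain t where "0 \<le> t" "t \<le> T" "poly p t = 0"
      using IVT[of "\<lambda>x. poly p x" 0 0 T] T by force
    then show False using nz pv by metis
  qed
  moreover have "B + 0 \<cdot>\<^sub>m 1\<^sub>m m = B" using B by (intro eq_matI) auto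
  ultimately show ?thesis using pv[of 0] by simp
qed

section \<open>Walks and cycles in the digraph of A\<close>

fun walk :: "nat \<Rightarrow> real mat \<Rightarrow> nat list \<Rightarrow> bool" where
  "walk n A [] = True"
| "walk n A [x] = (x < n)"
| "walk n A (x # y # ys) = (arc n A x y \<and> walk n A (y # ys))"

fun walk_prod :: "(nat \<Rightarrow> nat \<Rightarrow> real) \<Rightarrow> nat list \<Rightarrow> real" where
  "walk_prod f (x # y # ys) = f x y * walk_prod f (y # ys)"
| "walk_prod f _ = 1"

lemma walk_Cons_less: "walk n A (x # ys) \<Longrightarrow> x < n"
  by (cases ys) (auto simp: arc_def)

lemma walk_append_Cons: "walk n A (xs @ y # ys) = (walk n A (xs @ [y]) \<and> walk n A (y # ys))"
proof (induction xs)
  case Nil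
  then show ?case by (auto dest: walk_Cons_less)
next
  case (Cons x xs)
  then show ?case by (cases xs) (auto dest: walk_Cons_less simp: arc_def)
qed

lemma walk_append:
  assumes "xs \<noteq> []" "ys \<noteq> []"
  shows "walk n A (xs @ ys) = (walk n A xs \<and> walk n A ys \<and> arc n A (last xs) (hd ys))"
proof -
  obtain y ys' where y: "ys = y # ys'" using assms by (cases ys) auto
  obtain xs' l where l: "xs = xs' @ [l]" using assms by (cases xs rule: rev_cases) auto
  have "walk n A (xs @ ys) = (walk n A (xs' @ [l, y]) \<and> walk n A (y # ys'))"
    unfolding y l using walk_append_Cons[of n A "xs' @ [l]" y ys'] by simp
  also have "walk n A (xs' @ [l, y]) = (walk n A (xs' @ [l]) \<and> walk n A [l, y])"
    using walk_append_Cons[of n A xs' l "[y]"] by simp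
  finally show ?thesis unfolding y l by (auto simp: arc_def dest: walk_Cons_less)
qed

lemma walk_nth_arc: "walk n A w \<Longrightarrow> m + 1 < length w \<Longrightarrow> arc n A (w ! m) (w ! (m + 1))"
proof (induction w arbitrary: m rule: induct_list012)
  case (3 x y zs)
  then show ?case by (cases m) auto
qed auto

lemma walk_rev:
  assumes "\<And>x y. arc n A x y \<Longrightarrow> arc n A y x"
  shows "walk n A w \<Longrightarrow> walk n A (rev w)"
proof (induction w rule: induct_list012)
  case (3 x y zs)
  have "walk n A (rev (y # zs) @ [x])"
    using 3 assms by (subst walk_append) (auto simp: arc_def)
  then show ?case by simp
qed auto

lemma walk_remove_loops:
  "walk n A w \<Longrightarrow> w \<noteq> [] \<Longrightarrow>
     \<exists>w'. walk n A w' \<and> distinct w' \<and> w' \<noteq> [] \<and> hd w' = hd w \<and> last w' = last w"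
proof (induction "length w" arbitrary: w rule: less_induct)
  case less
  show ?case
  proof (cases "distinct w")
    case True then show ?thesis using less by blast
  next
    case False
    then obtain xs y ys zs where d: "w = xs @ [y] @ ys @ [y] @ zs"
      using not_distinct_decomp by blast
    define w2 where "w2 = xs @ [y] @ zs"
    have "walk n A (xs @ [y])" "walk n A (y # zs)"
      using less(2) walk_append_Cons[of n A xs y "ys @ y # zs"]
        walk_append_Cons[of n A "y # ys" y zs] unfolding d by auto
    then have "walk n A w2" unfolding w2_def using walk_append_Cons[of n A xs y zs] by simp
    moreover have "length w2 < length w" unfolding w2_def d by simp
    moreover have "hd w2 = hd w" unfolding w2_def d by (cases xs) auto
    moreover have "last w2 = last w" unfolding w2_def d by (cases zs rule: rev_cases) auto
    moreover have "w2 \<noteq> []" unfolding w2_def by simp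
    ultimately show ?thesis using less(1) by metis
  qed
qed

lemma walk_prod_append_Cons: "walk_prod f (xs @ y # ys) = walk_prod f (xs @ [y]) * walk_prod f (y # ys)"
proof (induction xs)
  case (Cons x xs)
  then show ?case by (cases xs) auto
qed simp

lemma walk_prod_Cons: "xs \<noteq> [] \<Longrightarrow> walk_prod f (x # xs) = f x (hd xs) * walk_prod f xs"
  by (cases xs) auto

lemma walk_prod_snoc: "ys \<noteq> [] \<Longrightarrow> walk_prod f (ys @ [x]) = walk_prod f ys * f (last ys) x"
proof (induction ys)
  case (Cons y ys)
  then show ?case by (cases ys) auto
qed simp

lemma walk_prod_append:
  assumes "xs \<noteq> []" "ys \<noteq> []"
  shows "walk_prod f (xs @ ys) = walk_prod f xs * f (last xs) (hd ys) * walk_prod f ys"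
proof -
  obtain y ys' where y: "ys = y # ys'" using assms by (cases ys) auto
  show ?thesis
    using walk_prod_append_Cons[of f xs y ys'] assms unfolding y by (simp add: walk_prod_snoc)
qed

lemma walk_prod_rev: "walk_prod f (rev xs) = walk_prod (\<lambda>x y. f y x) xs"
proof (induction xs)
  case (Cons x xs)
  then show ?case
    by (cases "xs = []") (simp_all add: walk_prod_snoc walk_prod_Cons last_rev)
qed simp

lemma walk_prod_divide: "walk_prod (\<lambda>x y. f x y / g x y) xs = walk_prod f xs / walk_prod g xs"
  by (induction xs rule: induct_list012) auto

lemma walk_prod_conv_prod: "walk_prod f xs = (\<Prod>m<length xs - 1. f (xs ! m) (xs ! (m + 1)))"
proof (induction xs rule: induct_list012)
  case (3 x y zs)
  have "walk_prod f (x # y # zs) = f x y * walk_prod f (y # zs)" by simp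
  also have "\<dots> = f x y * (\<Prod>m<length zs. f ((y # zs) ! m) ((y # zs) ! (m + 1)))"
    using 3 by simp
  also have "\<dots> = (\<Prod>m<Suc (length zs). f ((x # y # zs) ! m) ((x # y # zs) ! (m + 1)))"
    by (subst prod.lessThan_Suc_shift) simp
  finally show ?case by simp
qed auto

lemma walk_prod_pos: "walk n A w \<Longrightarrow> (\<And>x y. arc n A x y \<Longrightarrow> f x y > 0) \<Longrightarrow> walk_prod f w > 0"
  by (induction w rule: induct_list012) auto

lemma nth_append_hd_mod:
  assumes "cs \<noteq> []" "m < length cs"
  shows "(cs @ [hd cs]) ! (m + 1) = cs ! ((m + 1) mod length cs)"
proof (cases "m + 1 < length cs")
  case True then show ?thesis by (simp add: nth_append)
next
  case False
  then have "m + 1 = length cs" using assms by simp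
  then show ?thesis using assms by (simp add: nth_append hd_conv_nth)
qed

lemma is_cycle_if_closed_walk:
  assumes walk: "walk n A (cs @ [hd cs])" and "distinct cs" and len: "length cs \<ge> 2"
  shows "is_cycle n A cs"
  unfolding is_cycle_def
proof (intro conjI allI impI)
  fix m assume m: "m < length cs"
  have cs: "cs \<noteq> []" using len by auto
  have "arc n A ((cs @ [hd cs]) ! m) ((cs @ [hd cs]) ! (m + 1))"
    using walk_nth_arc[OF walk] m by simp
  then show "arc n A (cs ! m) (cs ! ((m + 1) mod length cs))"
    unfolding nth_append_hd_mod[OF cs m] nth_append_left[OF m] .
qed (use assms in auto)

lemma cycle_weight_conv_walk_prod:
  assumes "cs \<noteq> []"
  shows "cycle_weight A cs = walk_prod (\<lambda>x y. A $$ (y,x)) (cs @ [hd cs])"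
  unfolding cycle_weight_def walk_prod_conv_prod
proof (intro prod.cong)
  fix m assume "m \<in> {..<length (cs @ [hd cs]) - 1}"
  then have m: "m < length cs" by simp
  have "(cs @ [hd cs]) ! m = cs ! m" using m by (simp add: nth_append)
  moreover have "(cs @ [hd cs]) ! (m + 1) = cs ! ((m + 1) mod length cs)"
    using assms m by (rule nth_append_hd_mod)
  ultimately show "A $$ (cs ! ((m + 1) mod length cs), cs ! m)
      = A $$ ((cs @ [hd cs]) ! (m + 1), (cs @ [hd cs]) ! m)"
    by simp
qed simp

lemma cycle_weight_rev_conv_walk_prod:
  assumes "length cs \<ge> 2"
  shows "cycle_weight A (rev cs) = walk_prod (\<lambda>x y. A $$ (x,y)) (cs @ [hd cs])"
proof -
  obtain h cs1 where c1: "cs = h # cs1" using assms by (cases cs) auto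
  obtain mid l where c2: "cs1 = mid @ [l]" using assms c1 by (cases cs1 rule: rev_cases) auto
  define g where "g = (\<lambda>x y. A $$ (y,x))"
  have "cycle_weight A (rev cs) = walk_prod g (rev cs @ [hd (rev cs)])"
    unfolding g_def using assms by (intro cycle_weight_conv_walk_prod) auto
  also have "rev cs @ [hd (rev cs)] = (l # rev mid @ [h]) @ [l]" unfolding c1 c2 by simp
  also have "walk_prod g \<dots> = walk_prod g (h # l # rev mid @ [h])"
    by (subst walk_prod_snoc) auto
  also have "h # l # rev mid @ [h] = rev (cs @ [hd cs])" unfolding c1 c2 by simp
  finally show ?thesis unfolding walk_prod_rev g_def by simp
qed

section \<open>Weighted Laplacians\<close>

lemma weighted_laplacian_null_const:
  fixes w :: "nat \<Rightarrow> nat \<Rightarrow> real" and z :: "nat \<Rightarrow> real"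
  assumes nonneg: "\<forall>i<n. \<forall>j<n. i \<noteq> j \<longrightarrow> w i j \<ge> 0"
    and conn: "\<And>S. S \<subseteq> {0..<n} \<Longrightarrow> S \<noteq> {} \<Longrightarrow> S \<noteq> {0..<n} \<Longrightarrow>
      \<exists>i\<in>S. \<exists>j\<in>{0..<n} - S. i \<noteq> j \<and> w i j > 0"
    and null: "\<forall>i<n. (\<Sum>j<n. w i j * (z i - z j)) = 0"
    and n: "0 < n"
  shows "\<forall>i<n. z i = z 0"
proof -
  define M where "M = Max (z ` {..<n})"
  have le: "z i \<le> M" if "i < n" for i unfolding M_def using that by (intro Max_ge) auto
  define S where "S = {i\<in>{0..<n}. z i = M}"
  have "M \<in> z ` {..<n}" unfolding M_def using n by (intro Max_in) auto
  then have Sne: "S \<noteq> {}" unfolding S_def by auto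
  have "S = {0..<n}"
  proof (rule ccontr)
    assume "S \<noteq> {0..<n}"
    moreover have "S \<subseteq> {0..<n}" unfolding S_def by auto
    ultimately obtain i j where ij: "i \<in> S" "j \<in> {0..<n} - S" "i \<noteq> j" "w i j > 0"
      using conn Sne by blast
    have i: "i < n" "z i = M" using ij unfolding S_def by auto
    have j: "j < n" "z j < M" using ij le[of j] unfolding S_def by auto
    text \<open>At a maximum every term of the row sum is nonnegative, and the one towards j is positive.\<close>
    have "0 < (\<Sum>l<n. w i l * (z i - z l))"
    proof (rule sum_pos2)
      show "0 < w i j * (z i - z j)" using ij(4) i j by simp
      show "0 \<le> w i l * (z i - z l)" if "l \<in> {..<n}" for l
        using that nonneg i le[of l] by (cases "l = i") auto
    qed (use j in auto)
    then show False using null[rule_format, OF i(1)] i(2) by simp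
  qed
  then have "z i = M" if "i < n" for i
    using that unfolding S_def by (metis (mono_tags, lifting) atLeastLessThan_iff le0 mem_Collect_eq)
  then show ?thesis using n by simp
qed

lemma dirichlet_energy_identity:
  fixes W :: "nat \<Rightarrow> nat \<Rightarrow> 'a :: comm_ring_1"
  assumes sym: "\<forall>k<n. \<forall>j<n. W k j = W j k"
  shows "2 * (\<Sum>k<n. x k * (\<Sum>j<n. W k j * (x k - x j)))
       = (\<Sum>k<n. \<Sum>j<n. W k j * (x k - x j)\<^sup>2)"
proof -
  define E where "E = (\<Sum>k<n. \<Sum>j<n. W k j * x k * (x k - x j))"
  have L: "(\<Sum>k<n. x k * (\<Sum>j<n. W k j * (x k - x j))) = E"
    unfolding E_def by (intro sum.cong refl) (simp add: sum_distrib_left algebra_simps)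
  have "E = (\<Sum>j<n. \<Sum>k<n. W k j * x k * (x k - x j))" unfolding E_def by (rule sum.swap)
  also have "\<dots> = (\<Sum>k<n. \<Sum>j<n. W k j * x j * (x j - x k))"
    using sym by (intro sum.cong refl) auto
  finally have "2 * E = E + (\<Sum>k<n. \<Sum>j<n. W k j * x j * (x j - x k))" by simp
  also have "\<dots> = (\<Sum>k<n. \<Sum>j<n. W k j * (x k - x j)\<^sup>2)"
    unfolding E_def by (simp add: sum.distrib[symmetric] power2_eq_square algebra_simps)
  finally show ?thesis using L by simp
qed

section \<open>Cycle-balanced networks and Kolmogorov's criterion\<close>

locale cycle_balanced_network =
  fixes n :: nat and A :: "real mat"
  assumes n_pos: "0 < n"
    and nonneg: "\<forall>i<n. \<forall>j<n. i \<noteq> j \<longrightarrow> A $$ (i,j) \<ge> 0"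
    and irreducible: "irreducible_mat n (conn_matrix n A)"
    and balanced: "cycle_balanced n A"
begin

lemma irreducible_cut:
  assumes "S \<subseteq> {0..<n}" "S \<noteq> {}" "S \<noteq> {0..<n}"
  shows "\<exists>i\<in>S. \<exists>j\<in>{0..<n} - S. i \<noteq> j \<and> A $$ (i,j) > 0"
proof -
  obtain i j where ij: "i \<in> S" "j \<in> {0..<n} - S" "conn_matrix n A $$ (i,j) \<noteq> 0"
    using irreducible assms unfolding irreducible_mat_def by blast
  then have "i \<noteq> j" "i < n" "j < n" using assms by auto
  then have "A $$ (i,j) > 0"
    using ij(3) nonneg unfolding conn_matrix_def by (simp add: order_less_le)
  then show ?thesis using ij \<open>i \<noteq> j\<close> by blast
qed

lemma laplacian_null_const:
  assumes "\<forall>i<n. (\<Sum>j<n. A $$ (i,j) * (z i - z j)) = 0"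
  shows "\<forall>i<n. z i = z 0"
  using nonneg irreducible_cut assms n_pos by (rule weighted_laplacian_null_const)

lemma walk_exists:
  assumes "x < n" "y < n"
  shows "\<exists>w. walk n A w \<and> w \<noteq> [] \<and> hd w = x \<and> last w = y"
proof -
  define S where "S = {x\<in>{0..<n}. \<exists>w. walk n A w \<and> w \<noteq> [] \<and> hd w = x \<and> last w = y}"
  have yS: "y \<in> S" unfolding S_def using assms by (intro CollectI conjI exI[of _ "[y]"]) auto
  have "S = {0..<n}"
  proof (rule ccontr)
    assume ne: "S \<noteq> {0..<n}"
    have sub: "S \<subseteq> {0..<n}" unfolding S_def by auto
    obtain i j where ij: "i \<in> S" "j \<in> {0..<n} - S" "i \<noteq> j" "A $$ (i,j) > 0"
      using irreducible_cut[OF sub _ ne] yS by blast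
    obtain w where w: "walk n A w" "w \<noteq> []" "hd w = i" "last w = y"
      using ij(1) unfolding S_def by blast
    have "arc n A j i" unfolding arc_def using ij sub by auto
    then have "walk n A (j # w)" using w by (cases w) auto
    then have "j \<in> S" unfolding S_def using ij w by (intro CollectI conjI exI[of _ "j # w"]) auto
    then show False using ij by blast
  qed
  then show ?thesis using assms unfolding S_def by auto
qed

text \<open>Closing a simple walk from y back to x by an arc x \<rightarrow> y gives a cycle; the reversed cycle
  contains the arc y \<rightarrow> x.\<close>

lemma arc_sym:
  assumes xy: "arc n A x y"
  shows "arc n A y x"
proof -
  have "x < n" "y < n" "x \<noteq> y" using xy unfolding arc_def by auto
  then obtain w where "walk n A w" "w \<noteq> []" "hd w = y" "last w = x" using walk_exists by blast
  then obtain p where p: "walk n A p" "distinct p" "p \<noteq> []" "hd p = y" "last p = x"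
    using walk_remove_loops by metis
  have len: "length p \<ge> 2"
    using p \<open>x \<noteq> y\<close> by (cases p; cases "tl p") auto
  have "walk n A (p @ [hd p])" using p xy \<open>y < n\<close> by (subst walk_append) auto
  then have "is_cycle n A p" using p(2) len by (rule is_cycle_if_closed_walk)
  then have "is_cycle n A (rev p)" using balanced unfolding cycle_balanced_def by blast
  then have cyc: "\<forall>m<length p. arc n A (rev p ! m) (rev p ! (Suc m mod length p))"
    unfolding is_cycle_def by simp
  have k: "length p - 1 < length p" "Suc (length p - 1) = length p" using len by auto
  have "arc n A (rev p ! (length p - 1)) (rev p ! (Suc (length p - 1) mod length p))"
    using cyc k(1) by blast
  then have "arc n A (rev p ! (length p - 1)) (rev p ! 0)" unfolding k(2) by simp
  moreover have "rev p ! (length p - 1) = y" using p len by (simp add: rev_nth hd_conv_nth)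
  moreover have "rev p ! 0 = x" using p by (simp add: rev_nth last_conv_nth)
  ultimately show ?thesis by simp
qed

lemma arc_pos: "arc n A x y \<Longrightarrow> A $$ (x,y) > 0 \<and> A $$ (y,x) > 0"
  using arc_sym unfolding arc_def by blast

definition arc_ratio :: "nat \<Rightarrow> nat \<Rightarrow> real" where
  "arc_ratio x y = A $$ (x,y) / A $$ (y,x)"

lemma cycle_arc_ratio_prod:
  assumes walk: "walk n A (cs @ [hd cs])" and "distinct cs" and len: "length cs \<ge> 2"
  shows "walk_prod arc_ratio (cs @ [hd cs]) = 1"
proof -
  have "is_cycle n A cs" using assms by (rule is_cycle_if_closed_walk)
  then have "cycle_weight A (rev cs) = cycle_weight A cs"
    using balanced unfolding cycle_balanced_def by blast
  then have eq: "walk_prod (\<lambda>x y. A $$ (x,y)) (cs @ [hd cs]) = walk_prod (\<lambda>x y. A $$ (y,x)) (cs @ [hd cs])"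
    using cycle_weight_conv_walk_prod[of cs A] cycle_weight_rev_conv_walk_prod[OF len, of A] len
    by force
  have "walk_prod (\<lambda>x y. A $$ (y,x)) (cs @ [hd cs]) > 0"
    using walk by (rule walk_prod_pos) (auto dest: arc_pos)
  then show ?thesis using eq unfolding arc_ratio_def walk_prod_divide by simp
qed

text \<open>Kolmogorov's criterion: cycle balance makes the product of the ratios trivial around every
  closed walk, since a closed walk splits at a repeated vertex into shorter closed walks.\<close>

lemma closed_walk_arc_ratio_prod:
  "walk n A w \<Longrightarrow> w \<noteq> [] \<Longrightarrow> hd w = last w \<Longrightarrow> walk_prod arc_ratio w = 1"
proof (induction "length w" arbitrary: w rule: less_induct)
  case less
  obtain cs l where wcs: "w = cs @ [l]" using less(3) by (cases w rule: rev_cases) auto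
  show ?case
  proof (cases "distinct cs")
    case True
    consider "cs = []" | a where "cs = [a]" | "length cs \<ge> 2"
      by (cases cs; cases "tl cs") auto
    then show ?thesis
    proof cases
      case (2 a)
      then show ?thesis using less(2,4) wcs by (simp add: arc_def)
    next
      case 3
      then have "w = cs @ [hd cs]" using less(4) wcs by (cases cs) auto
      then show ?thesis using cycle_arc_ratio_prod less(2) True 3 by simp
    qed (use wcs in simp)
  next
    case False
    then obtain xs y ys zs where d: "cs = xs @ [y] @ ys @ [y] @ zs"
      using not_distinct_decomp by blast
    define w1 where "w1 = y # ys @ [y]"
    define w2 where "w2 = xs @ [y] @ zs @ [l]"
    have wd: "w = xs @ y # (ys @ y # (zs @ [l]))" using wcs d by simp
    have "walk n A (xs @ [y])" "walk n A (y # (ys @ y # (zs @ [l])))"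
      using less(2) walk_append_Cons[of n A xs y "ys @ y # (zs @ [l])"] wd by auto
    then have walks: "walk n A w1" "walk n A w2"
      using walk_append_Cons[of n A "y # ys" y "zs @ [l]"] walk_append_Cons[of n A xs y "zs @ [l]"]
      unfolding w1_def w2_def by auto
    have "walk_prod arc_ratio w1 = 1"
      using less(1)[of w1] walks(1) unfolding w1_def wd by simp
    moreover have "walk_prod arc_ratio w2 = 1"
    proof (rule less(1))
      show "length w2 < length w" "walk n A w2" "w2 \<noteq> []"
        using walks unfolding w2_def wd by auto
      show "hd w2 = last w2" using less(4) unfolding w2_def wd by (cases xs) auto
    qed
    moreover have "walk_prod arc_ratio w = walk_prod arc_ratio w2 * walk_prod arc_ratio w1"
      unfolding wd w1_def w2_def
      using walk_prod_append_Cons[of arc_ratio xs y "ys @ y # (zs @ [l])"]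
        walk_prod_append_Cons[of arc_ratio "y # ys" y "zs @ [l]"]
        walk_prod_append_Cons[of arc_ratio xs y "zs @ [l]"]
      by simp
    ultimately show ?thesis by simp
  qed
qed

definition root_walk :: "nat \<Rightarrow> nat list" where
  "root_walk j = (SOME w. walk n A w \<and> w \<noteq> [] \<and> hd w = 0 \<and> last w = j)"

text \<open>By Kolmogorov's criterion the product of the ratios along a walk from 0 to j does not
  depend on the walk, so it defines a potential in detailed balance with A.\<close>

definition potential :: "nat \<Rightarrow> real" where
  "potential j = walk_prod arc_ratio (root_walk j)"

lemma root_walk:
  "j < n \<Longrightarrow> walk n A (root_walk j) \<and> root_walk j \<noteq> [] \<and> hd (root_walk j) = 0 \<and> last (root_walk j) = j"
  unfolding root_walk_def by (rule someI_ex) (use walk_exists n_pos in auto)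

lemma potential_pos:
  assumes "j < n"
  shows "potential j > 0"
  unfolding potential_def using root_walk[OF assms]
  by (auto intro!: walk_prod_pos simp: arc_ratio_def dest: arc_pos)

lemma potential_detailed_balance:
  assumes i: "i < n" and j: "j < n"
  shows "potential i * A $$ (i,j) = potential j * A $$ (j,i)"
proof (cases "arc n A j i")
  case True
  then have ij: "arc n A i j" by (rule arc_sym)
  then have pos: "A $$ (i,j) > 0" "A $$ (j,i) > 0" using arc_pos by auto
  have Wi: "walk n A (root_walk i)" "root_walk i \<noteq> []" "hd (root_walk i) = 0" "last (root_walk i) = i"
    using root_walk[OF i] by auto
  have Wj: "walk n A (root_walk j)" "root_walk j \<noteq> []" "hd (root_walk j) = 0" "last (root_walk j) = j"
    using root_walk[OF j] by auto
  define c where "c = root_walk i @ rev (root_walk j)"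
  have "walk n A c" unfolding c_def
    using Wi Wj ij walk_rev[OF arc_sym Wj(1)] by (subst walk_append) (auto simp: hd_rev)
  then have "walk_prod arc_ratio c = 1"
    by (rule closed_walk_arc_ratio_prod) (auto simp: c_def Wi Wj last_rev)
  moreover have "walk_prod arc_ratio c = potential i * arc_ratio i j * walk_prod arc_ratio (rev (root_walk j))"
    unfolding c_def potential_def using Wi Wj by (subst walk_prod_append) (auto simp: hd_rev)
  moreover have "walk_prod arc_ratio (rev (root_walk j)) = 1 / potential j"
  proof -
    have one: "walk_prod (\<lambda>x y. 1) xs = 1" for xs :: "nat list"
      by (induction xs rule: induct_list012) auto
    have "walk_prod arc_ratio (rev (root_walk j)) = walk_prod (\<lambda>x y. 1 / arc_ratio x y) (root_walk j)"
      unfolding walk_prod_rev by (simp add: arc_ratio_def)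
    then show ?thesis unfolding potential_def walk_prod_divide one .
  qed
  ultimately have "potential i * arc_ratio i j = potential j"
    using potential_pos[OF j] by (simp add: field_simps)
  then show ?thesis using pos unfolding arc_ratio_def by (auto simp: field_simps)
next
  case False
  moreover have "\<not> arc n A i j" using False arc_sym by blast
  ultimately have "A $$ (i,j) = 0 \<and> A $$ (j,i) = 0" if "i \<noteq> j"
    using nonneg i j that unfolding arc_def by force
  then show ?thesis by (cases "i = j") auto
qed

section \<open>The cofactors alpha\<close>

abbreviation Lap :: "real mat" where
  "Lap \<equiv> calL_matrix n A"

lemma Lap_carrier: "Lap \<in> carrier_mat n n"
  unfolding calL_matrix_def by simp

lemma Lap_entry: "i < n \<Longrightarrow> j < n \<Longrightarrow>
  Lap $$ (i,j) = (if i = j then (\<Sum>k\<in>{..<n} - {i}. A $$ (i,k)) else - A $$ (i,j))"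
  unfolding calL_matrix_def by (simp add: atLeast0LessThan)

lemma Lap_mult_row:
  assumes i: "i < n"
  shows "(\<Sum>j<n. Lap $$ (i,j) * x j) = (\<Sum>j<n. A $$ (i,j) * (x i - x j))"
proof -
  have "(\<Sum>j<n. Lap $$ (i,j) * x j) = Lap $$ (i,i) * x i + (\<Sum>j\<in>{..<n} - {i}. Lap $$ (i,j) * x j)"
    using i by (subst sum.remove[of _ i]) auto
  also have "\<dots> = (\<Sum>j\<in>{..<n} - {i}. A $$ (i,j) * (x i - x j))"
    using i by (simp add: Lap_entry sum_distrib_right right_diff_distrib sum_subtractf sum_negf)
  also have "\<dots> = (\<Sum>j<n. A $$ (i,j) * (x i - x j))"
    using i by (subst (2) sum.remove[of _ i]) auto
  finally show ?thesis .
qed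

lemma Lap_mult_col:
  assumes k: "k < n"
  shows "(\<Sum>j<n. y j * Lap $$ (j,k)) = (\<Sum>j<n. y k * A $$ (k,j) - y j * A $$ (j,k))"
proof -
  have "(\<Sum>j<n. y j * Lap $$ (j,k)) = y k * Lap $$ (k,k) + (\<Sum>j\<in>{..<n} - {k}. y j * Lap $$ (j,k))"
    using k by (subst sum.remove[of _ k]) auto
  also have "\<dots> = (\<Sum>j\<in>{..<n} - {k}. y k * A $$ (k,j) - y j * A $$ (j,k))"
    using k by (simp add: Lap_entry sum_distrib_left sum_subtractf sum_negf)
  also have "\<dots> = (\<Sum>j<n. y k * A $$ (k,j) - y j * A $$ (j,k))"
    using k by (subst (2) sum.remove[of _ k]) auto
  finally show ?thesis .
qed

lemma det_Lap_eq_0: "det Lap = 0"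
proof -
  define v :: "real vec" where "v = vec n (\<lambda>_. 1)"
  have "Lap *\<^sub>v v = 0\<^sub>v n"
  proof (rule eq_vecI)
    fix i assume "i < dim_vec (0\<^sub>v n :: real vec)"
    then have i: "i < n" by simp
    have "(Lap *\<^sub>v v) $ i = (\<Sum>j<n. Lap $$ (i,j) * 1)"
      using mat_mult_vec_entry_sum[OF Lap_carrier, of v i] i unfolding v_def by simp
    then show "(Lap *\<^sub>v v) $ i = 0\<^sub>v n $ i" using i Lap_mult_row[OF i, of "\<lambda>_. 1"] by simp
  qed (use Lap_carrier in auto)
  moreover have "v \<noteq> 0\<^sub>v n" using n_pos unfolding v_def by (auto simp: vec_eq_iff)
  moreover have "v \<in> carrier_vec n" unfolding v_def by simp
  ultimately show ?thesis using det_0_iff_vec_prod_zero[OF Lap_carrier] by blast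
qed

lemma alpha_eq_adj_diag: "i < n \<Longrightarrow> alpha n A i = adj_mat Lap $$ (i,i)"
  unfolding alpha_def adj_mat_def cofactor_def using Lap_carrier by simp

text \<open>Since det Lap = 0, the columns of adj Lap lie in the kernel of Lap, which consists of the
  constant vectors; so each column of adj Lap is constant, equal to its diagonal entry.\<close>

lemma adj_Lap_col_const:
  assumes k: "k < n" and j: "j < n"
  shows "adj_mat Lap $$ (k,j) = alpha n A j"
proof -
  have ad: "Lap * adj_mat Lap = 0\<^sub>m n n"
    using adj_mat(2)[OF Lap_carrier] det_Lap_eq_0 by (auto intro: eq_matI)
  have "(\<Sum>l<n. A $$ (i,l) * (adj_mat Lap $$ (i,j) - adj_mat Lap $$ (l,j))) = 0" if i: "i < n" for i
    using ad i j mat_mult_entry_sum[OF Lap_carrier adj_mat(1)[OF Lap_carrier] i j]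
      Lap_mult_row[OF i, of "\<lambda>l. adj_mat Lap $$ (l,j)"] by simp
  then have "\<forall>i<n. adj_mat Lap $$ (i,j) = adj_mat Lap $$ (0,j)"
    by (intro laplacian_null_const) blast
  then show ?thesis using k j alpha_eq_adj_diag[OF j] by metis
qed

lemma alpha_left_null:
  assumes k: "k < n"
  shows "(\<Sum>j<n. alpha n A j * Lap $$ (j,k)) = 0"
proof -
  have "adj_mat Lap * Lap = 0\<^sub>m n n"
    using adj_mat(3)[OF Lap_carrier] det_Lap_eq_0 by (auto intro: eq_matI)
  then have "(\<Sum>j<n. adj_mat Lap $$ (0,j) * Lap $$ (j,k)) = 0"
    using mat_mult_entry_sum[OF adj_mat(1)[OF Lap_carrier] Lap_carrier n_pos k] n_pos k by simp
  then show ?thesis using adj_Lap_col_const n_pos by simp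
qed

text \<open>Detailed balance turns the left null vector equation for alpha into a Laplacian equation
  for alpha / potential.\<close>

lemma alpha_proportional_potential: "\<exists>\<kappa>. \<forall>j<n. alpha n A j = \<kappa> * potential j"
proof -
  define z where "z j = alpha n A j / potential j" for j
  have az: "alpha n A j = z j * potential j" if "j < n" for j
    unfolding z_def using potential_pos[OF that] by simp
  have "(\<Sum>j<n. A $$ (k,j) * (z k - z j)) = 0" if k: "k < n" for k
  proof -
    have "0 = (\<Sum>j<n. alpha n A k * A $$ (k,j) - alpha n A j * A $$ (j,k))"
      using alpha_left_null[OF k] Lap_mult_col[OF k] by simp
    also have "\<dots> = (\<Sum>j<n. potential k * (A $$ (k,j) * (z k - z j)))"
    proof (intro sum.cong refl)
      fix j assume "j \<in> {..<n}"
      then have "alpha n A j * A $$ (j,k) = z j * (potential k * A $$ (k,j))"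
        using az potential_detailed_balance[OF k] by simp
      then show "alpha n A k * A $$ (k,j) - alpha n A j * A $$ (j,k)
          = potential k * (A $$ (k,j) * (z k - z j))"
        using az[OF k] by (simp add: algebra_simps)
    qed
    finally show ?thesis using potential_pos[OF k] by (simp flip: sum_distrib_left)
  qed
  then have "\<forall>j<n. z j = z 0" by (intro laplacian_null_const) blast
  then show ?thesis using az by metis
qed

lemma grounded_eigenvector_zero:
  assumes t: "t \<ge> 0" and x0: "x 0 = 0"
    and eig: "\<And>k. 0 < k \<Longrightarrow> k < n \<Longrightarrow> (\<Sum>j<n. A $$ (k,j) * (x k - x j)) = - t * x k"
  shows "\<forall>k<n. x k = 0"
proof -
  define W where "W k j = potential k * A $$ (k,j)" for k j
  have Wsym: "\<forall>k<n. \<forall>j<n. W k j = W j k"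
    unfolding W_def using potential_detailed_balance by auto
  have terms_nonneg: "0 \<le> W k j * (x k - x j)\<^sup>2" if "k < n" "j < n" for k j
    using nonneg potential_pos[OF that(1)] that by (cases "k = j") (auto simp: W_def)
  have row: "x k * (\<Sum>j<n. W k j * (x k - x j)) = - t * (potential k * (x k)\<^sup>2)" if k: "k < n" for k
  proof (cases "k = 0")
    case False
    then have k0: "0 < k" by simp
    have "x k * (\<Sum>j<n. W k j * (x k - x j)) = potential k * x k * (\<Sum>j<n. A $$ (k,j) * (x k - x j))"
      unfolding W_def by (simp add: sum_distrib_left mult_ac)
    also have "\<dots> = - t * (potential k * (x k)\<^sup>2)"
      unfolding eig[OF k0 k] by (simp add: power2_eq_square mult_ac)
    finally show ?thesis .
  qed (simp add: x0)
  text \<open>The Dirichlet energy of x is nonnegative, but by the eigenvalue equation it is also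
    nonpositive.\<close>
  have "(\<Sum>k<n. x k * (\<Sum>j<n. W k j * (x k - x j))) = (\<Sum>k<n. - t * (potential k * (x k)\<^sup>2))"
    using row by (intro sum.cong) auto
  then have "(\<Sum>k<n. \<Sum>j<n. W k j * (x k - x j)\<^sup>2) = - 2 * t * (\<Sum>k<n. potential k * (x k)\<^sup>2)"
    unfolding dirichlet_energy_identity[OF Wsym, symmetric] by (simp add: sum_distrib_left mult.assoc)
  also have "\<dots> \<le> 0"
    using t potential_pos by (intro mult_nonpos_nonneg sum_nonneg) (auto simp: less_imp_le)
  finally have energy: "(\<Sum>k<n. \<Sum>j<n. W k j * (x k - x j)\<^sup>2) = 0"
    using terms_nonneg by (intro antisym sum_nonneg) auto
  have "A $$ (k,j) * (x k - x j) = 0" if "k < n" "j < n" for k j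
  proof -
    have "(\<Sum>j<n. W k j * (x k - x j)\<^sup>2) = 0"
      using energy terms_nonneg that by (subst (asm) sum_nonneg_eq_0_iff) (auto intro: sum_nonneg)
    then have "W k j * (x k - x j)\<^sup>2 = 0"
      using terms_nonneg that by (subst (asm) sum_nonneg_eq_0_iff) auto
    then show ?thesis using potential_pos[OF that(1)] unfolding W_def by simp
  qed
  then have "\<forall>k<n. (\<Sum>j<n. A $$ (k,j) * (x k - x j)) = 0"
    by (intro allI impI sum.neutral) blast
  then show ?thesis using laplacian_null_const[of x] x0 by simp
qed

abbreviation grounded_Lap :: "real mat" where
  "grounded_Lap \<equiv> mat_delete Lap 0 0"

lemma det_grounded_Lap_shift_nonzero:
  assumes t: "t \<ge> 0"
  shows "det (grounded_Lap + t \<cdot>\<^sub>m 1\<^sub>m (n - 1)) \<noteq> 0"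
proof
  define m where "m = n - 1"
  have nm: "n = Suc m" unfolding m_def using n_pos by simp
  define C where "C = grounded_Lap + t \<cdot>\<^sub>m 1\<^sub>m m"
  have Cc: "C \<in> carrier_mat m m" unfolding C_def m_def mat_delete_def using Lap_carrier by auto
  have C_entry: "C $$ (i,j) = Lap $$ (Suc i, Suc j) + (if i = j then t else 0)"
    if "i < m" "j < m" for i j
    using that Lap_carrier unfolding C_def m_def mat_delete_def by auto
  assume "det (grounded_Lap + t \<cdot>\<^sub>m 1\<^sub>m (n - 1)) = 0"
  then obtain v where v: "v \<in> carrier_vec m" "v \<noteq> 0\<^sub>v m" "C *\<^sub>v v = 0\<^sub>v m"
    using det_0_iff_vec_prod_zero[OF Cc] unfolding C_def m_def by blast
  define x where "x k = (if k = 0 then 0 else v $ (k - 1))" for k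
  have "(\<Sum>j<n. A $$ (k,j) * (x k - x j)) = - t * x k" if k: "0 < k" "k < n" for k
  proof -
    obtain i where i: "k = Suc i" "i < m" using k nm by (cases k) auto
    have "0 = (C *\<^sub>v v) $ i" using v i by simp
    also have "\<dots> = (\<Sum>j<m. Lap $$ (k, Suc j) * v $ j) + t * v $ i"
      using mat_mult_vec_entry_sum[OF Cc v(1) i(2)] i
      by (simp add: C_entry distrib_right sum.distrib sum_if_eq_mult)
    also have "(\<Sum>j<m. Lap $$ (k, Suc j) * v $ j) = (\<Sum>j<n. Lap $$ (k,j) * x j)"
      unfolding nm sum.lessThan_Suc_shift by (simp add: x_def)
    finally show ?thesis using Lap_mult_row[OF k(2), of x] i by (simp add: x_def)
  qed
  then have "\<forall>k<n. x k = 0" using t by (intro grounded_eigenvector_zero) (auto simp: x_def)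
  then have "v = 0\<^sub>v m" using v(1) nm by (intro eq_vecI) (auto simp: x_def)
  with v(2) show False by simp
qed

lemma alpha_0_pos: "alpha n A 0 > 0"
proof -
  have "grounded_Lap \<in> carrier_mat (n - 1) (n - 1)"
    using Lap_carrier unfolding mat_delete_def by auto
  then have "det grounded_Lap > 0"
    using det_grounded_Lap_shift_nonzero by (rule det_pos_if_shifts_nonsingular)
  then show ?thesis unfolding alpha_def by simp
qed

lemma alpha_eq_scaled_potential:
  obtains \<kappa> where "\<kappa> > 0" "\<And>j. j < n \<Longrightarrow> alpha n A j = \<kappa> * potential j"
proof -
  obtain \<kappa> where \<kappa>: "\<forall>j<n. alpha n A j = \<kappa> * potential j"
    using alpha_proportional_potential by blast
  then have "\<kappa> > 0"
    using alpha_0_pos potential_pos[OF n_pos] n_pos by (auto simp: zero_less_mult_iff)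
  then show ?thesis using \<kappa> that by blast
qed

lemma alpha_pos: "i < n \<Longrightarrow> alpha n A i > 0"
  using potential_pos by (metis alpha_eq_scaled_potential mult_pos_pos)

lemma alpha_weighted_sum_pos:
  assumes "\<And>i. i < n \<Longrightarrow> f i > 0"
  shows "(\<Sum>i<n. alpha n A i * f i) > 0"
  using assms alpha_pos n_pos by (intro sum_pos) (auto intro: mult_pos_pos)

lemma alpha_detailed_balance:
  assumes "i < n" "j < n"
  shows "alpha n A i * A $$ (i,j) = alpha n A j * A $$ (j,i)"
proof -
  obtain \<kappa> where "\<And>j. j < n \<Longrightarrow> alpha n A j = \<kappa> * potential j"
    using alpha_eq_scaled_potential by blast
  then show ?thesis using potential_detailed_balance[OF assms] assms by (simp add: mult.assoc)
qed

section \<open>The principal eigenvalue lambda1\<close>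

lemma lambda1_rayleigh_le:
  assumes \<phi>: "\<exists>i<n. \<phi> i \<noteq> 0"
  shows "lambda1 n A \<mu> h * (\<Sum>i<n. alpha n A i * (\<phi> i)\<^sup>2)
    \<le> - (\<Sum>i<n. alpha n A i * \<phi> i *
          (\<Sum>j<n. (\<mu> * conn_matrix n A $$ (i,j) + (if i = j then h i else 0)) * \<phi> j))"
proof -
  define M where "M i j = \<mu> * conn_matrix n A $$ (i,j) + (if i = j then h i else 0)" for i j
  have "alpha n A i * M i j = alpha n A j * M j i" if "i < n" "j < n" for i j
    using alpha_detailed_balance[OF that] that
    by (cases "i = j") (auto simp: M_def conn_matrix_def mult.left_commute)
  then obtain t w where tw:
      "(\<Sum>i<n. alpha n A i * \<phi> i * (\<Sum>j<n. M i j * \<phi> j)) \<le> t * (\<Sum>i<n. alpha n A i * (\<phi> i)\<^sup>2)"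
      "\<exists>i<n. w i \<noteq> 0" "\<forall>i<n. (\<Sum>j<n. M i j * w j) = t * w i"
    using reversible_eigenvalue_ge_rayleigh[of n "alpha n A" M \<phi>] alpha_pos \<phi> by blast
  have "t \<le> spectral_bound (mat n n (\<lambda>(i,j). M i j))"
    by (rule real_eigenvalue_le_spectral_bound[of _ n]) (use tw(2,3) in auto)
  then have "lambda1 n A \<mu> h \<le> - t" unfolding lambda1_def M_def by simp
  moreover have "(\<Sum>i<n. alpha n A i * (\<phi> i)\<^sup>2) \<ge> 0"
    using alpha_pos by (intro sum_nonneg) (simp add: less_imp_le)
  ultimately have "lambda1 n A \<mu> h * (\<Sum>i<n. alpha n A i * (\<phi> i)\<^sup>2) \<le> - t * (\<Sum>i<n. alpha n A i * (\<phi> i)\<^sup>2)"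
    by (rule mult_right_mono)
  then show ?thesis using tw(1) unfolding M_def by simp
qed

lemma lambda1_equilibrium_le:
  assumes w: "pos_equilibrium n A \<mu> r w"
  shows "lambda1 n A \<mu> h * (\<Sum>i<n. alpha n A i * (w i)\<^sup>2)
    \<le> (\<Sum>i<n. alpha n A i * (w i)\<^sup>2 * (r i - h i - w i))"
proof -
  have row: "(\<Sum>j<n. (\<mu> * conn_matrix n A $$ (i,j) + (if i = j then h i else 0)) * w j)
      = w i * (w i - r i + h i)" if i: "i < n" for i
  proof -
    have "(\<Sum>j<n. (\<mu> * conn_matrix n A $$ (i,j) + (if i = j then h i else 0)) * w j)
        = \<mu> * (\<Sum>j<n. conn_matrix n A $$ (i,j) * w j) + h i * w i"
      using i by (simp add: distrib_right sum.distrib sum_distrib_left mult.assoc sum_if_eq_mult)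
    moreover have "\<mu> * (\<Sum>j<n. conn_matrix n A $$ (i,j) * w j) + w i * (r i - w i) = 0"
      using w i unfolding pos_equilibrium_def by blast
    ultimately show ?thesis by (simp add: algebra_simps)
  qed
  have "\<exists>i<n. w i \<noteq> 0" using w n_pos unfolding pos_equilibrium_def by force
  then have "lambda1 n A \<mu> h * (\<Sum>i<n. alpha n A i * (w i)\<^sup>2)
      \<le> - (\<Sum>i<n. alpha n A i * w i * (w i * (w i - r i + h i)))"
    using lambda1_rayleigh_le[of w \<mu> h] row by simp
  also have "\<dots> = (\<Sum>i<n. alpha n A i * (w i)\<^sup>2 * (r i - h i - w i))"
    by (simp add: sum_negf[symmetric] power2_eq_square algebra_simps)
  finally show ?thesis .
qed

end

section \<open>The competition estimate\<close>

lemma competition_identity: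
  fixes b c u v :: real
  shows "u\<^sup>2 * (c * v - u) + c ^ 3 * (v\<^sup>2 * (b * u - v))
    = - ((c * v - u)\<^sup>2 * (c * v + u)) - (1 - b * c) * (c\<^sup>2 * v\<^sup>2 * u)"
  by (simp add: algebra_simps power2_eq_square power3_eq_cube)

lemma sum_weighted_sq_diff_nonneg:
  fixes a x y :: "nat \<Rightarrow> real"
  assumes a: "\<And>i. i < n \<Longrightarrow> a i > 0" and xy: "\<And>i. i < n \<Longrightarrow> x i + y i > 0"
  shows "0 \<le> (\<Sum>i<n. a i * (x i - y i)\<^sup>2 * (x i + y i))"
    and "(\<Sum>i<n. a i * (x i - y i)\<^sup>2 * (x i + y i)) = 0 \<longleftrightarrow> (\<forall>i<n. x i = y i)"
proof -
  have terms: "0 \<le> a i * (x i - y i)\<^sup>2 * (x i + y i)" if "i < n" for i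
    using a[OF that] xy[OF that] by (intro mult_nonneg_nonneg) (simp_all add: less_imp_le)
  then show "0 \<le> (\<Sum>i<n. a i * (x i - y i)\<^sup>2 * (x i + y i))" by (intro sum_nonneg) simp
  have "(\<Sum>i<n. a i * (x i - y i)\<^sup>2 * (x i + y i)) = 0
      \<longleftrightarrow> (\<forall>i\<in>{..<n}. a i * (x i - y i)\<^sup>2 * (x i + y i) = 0)"
    using terms by (intro sum_nonneg_eq_0_iff) auto
  also have "\<dots> \<longleftrightarrow> (\<forall>i<n. x i = y i)"
  proof -
    have "a i * (x i - y i)\<^sup>2 * (x i + y i) = 0 \<longleftrightarrow> x i = y i" if "i < n" for i
      using a[OF that] xy[OF that] by simp
    then show ?thesis by auto
  qed
  finally show "(\<Sum>i<n. a i * (x i - y i)\<^sup>2 * (x i + y i)) = 0 \<longleftrightarrow> (\<forall>i<n. x i = y i)" .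
qed

context cycle_balanced_network
begin

lemma competition_estimate:
  assumes c: "c > 0" and u: "pos_equilibrium n A \<mu>u p u" and v: "pos_equilibrium n A \<mu>v q v"
  shows "lambda1 n A \<mu>u (\<lambda>i. p i - c * v i) * (\<Sum>i<n. alpha n A i * (u i)\<^sup>2)
       + c ^ 3 * lambda1 n A \<mu>v (\<lambda>i. q i - b * u i) * (\<Sum>i<n. alpha n A i * (v i)\<^sup>2)
     \<le> - (\<Sum>i<n. alpha n A i * (c * v i - u i)\<^sup>2 * (c * v i + u i))
       - (1 - b * c) * (\<Sum>i<n. alpha n A i * (c\<^sup>2 * (v i)\<^sup>2 * u i))"
proof -
  have "lambda1 n A \<mu>u (\<lambda>i. p i - c * v i) * (\<Sum>i<n. alpha n A i * (u i)\<^sup>2)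
      \<le> (\<Sum>i<n. alpha n A i * ((u i)\<^sup>2 * (c * v i - u i)))"
    using lambda1_equilibrium_le[OF u, of "\<lambda>i. p i - c * v i"] by (simp add: mult.assoc)
  moreover have "c ^ 3 * (lambda1 n A \<mu>v (\<lambda>i. q i - b * u i) * (\<Sum>i<n. alpha n A i * (v i)\<^sup>2))
      \<le> c ^ 3 * (\<Sum>i<n. alpha n A i * ((v i)\<^sup>2 * (b * u i - v i)))"
    using lambda1_equilibrium_le[OF v, of "\<lambda>i. q i - b * u i"] c
    by (intro mult_left_mono) (simp_all add: mult.assoc)
  moreover have "(\<Sum>i<n. alpha n A i * ((u i)\<^sup>2 * (c * v i - u i)))
      + c ^ 3 * (\<Sum>i<n. alpha n A i * ((v i)\<^sup>2 * (b * u i - v i)))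
    = - (\<Sum>i<n. alpha n A i * (c * v i - u i)\<^sup>2 * (c * v i + u i))
       - (1 - b * c) * (\<Sum>i<n. alpha n A i * (c\<^sup>2 * (v i)\<^sup>2 * u i))"
  proof -
    have "(\<Sum>i<n. alpha n A i * ((u i)\<^sup>2 * (c * v i - u i)))
        + c ^ 3 * (\<Sum>i<n. alpha n A i * ((v i)\<^sup>2 * (b * u i - v i)))
      = (\<Sum>i<n. alpha n A i * ((u i)\<^sup>2 * (c * v i - u i) + c ^ 3 * ((v i)\<^sup>2 * (b * u i - v i))))"
      by (simp add: sum.distrib sum_distrib_left distrib_left mult.left_commute)
    also have "\<dots> = (\<Sum>i<n. alpha n A i *
        (- ((c * v i - u i)\<^sup>2 * (c * v i + u i)) - (1 - b * c) * (c\<^sup>2 * (v i)\<^sup>2 * u i)))"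
      by (simp only: competition_identity)
    also have "\<dots> = - (\<Sum>i<n. alpha n A i * (c * v i - u i)\<^sup>2 * (c * v i + u i))
       - (1 - b * c) * (\<Sum>i<n. alpha n A i * (c\<^sup>2 * (v i)\<^sup>2 * u i))"
      by (simp add: sum_distrib_left sum_subtractf sum_negf right_diff_distrib
          mult.assoc mult.left_commute)
    finally show ?thesis .
  qed
  ultimately show ?thesis by (simp add: mult.assoc)
qed

end

theorem mainTheorem5:
  fixes n :: nat and A :: "real mat" and b c \<mu>u \<mu>v :: real
    and p q u v :: "nat \<Rightarrow> real"
  assumes n2: "n \<ge> 2"
    and Adim: "A \<in> carrier_mat n n"
    and Anonneg: "\<forall>i<n. \<forall>j<n. i \<noteq> j \<longrightarrow> A $$ (i,j) \<ge> 0"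
    and A1: "b > 0" "c > 0" "b * c \<le> 1" "\<forall>i<n. p i > 0" "\<forall>i<n. q i > 0"
    and A2: "irreducible_mat n (conn_matrix n A)"
    and A3: "cycle_balanced n A"
    and mu: "\<mu>u > 0" "\<mu>v > 0"
    and ustar: "pos_equilibrium n A \<mu>u p u"
    and vstar: "pos_equilibrium n A \<mu>v q v"
  shows
    "lambda1 n A \<mu>u (\<lambda>i. p i - c * v i) * (\<Sum>i<n. alpha n A i * (u i)\<^sup>2)
       + c ^ 3 * lambda1 n A \<mu>v (\<lambda>i. q i - b * u i) * (\<Sum>i<n. alpha n A i * (v i)\<^sup>2)
     \<le> - (\<Sum>i<n. alpha n A i * (c * v i - u i)\<^sup>2 * (c * v i + u i))
   \<and> - (\<Sum>i<n. alpha n A i * (c * v i - u i)\<^sup>2 * (c * v i + u i)) \<le> 0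
   \<and> ((lambda1 n A \<mu>u (\<lambda>i. p i - c * v i) * (\<Sum>i<n. alpha n A i * (u i)\<^sup>2)
         + c ^ 3 * lambda1 n A \<mu>v (\<lambda>i. q i - b * u i) * (\<Sum>i<n. alpha n A i * (v i)\<^sup>2) = 0
        \<and> (\<Sum>i<n. alpha n A i * (c * v i - u i)\<^sup>2 * (c * v i + u i)) = 0)
       \<longrightarrow> (\<forall>i<n. u i = c * v i) \<and> b * c = 1)
   \<and> ((lambda1 n A \<mu>v (\<lambda>i. q i - b * u i) \<ge> 0 \<and> lambda1 n A \<mu>u (\<lambda>i. p i - c * v i) \<ge> 0)
       \<longrightarrow> lambda1 n A \<mu>v (\<lambda>i. q i - b * u i) = 0 \<and> lambda1 n A \<mu>u (\<lambda>i. p i - c * v i) = 0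
           \<and> b * c = 1 \<and> (\<forall>i<n. u i = c * v i))"
proof -
  interpret cycle_balanced_network n A using n2 Anonneg A2 A3 by unfold_locales simp_all
  define lu where "lu = lambda1 n A \<mu>u (\<lambda>i. p i - c * v i)"
  define lv where "lv = lambda1 n A \<mu>v (\<lambda>i. q i - b * u i)"
  define Su where "Su = (\<Sum>i<n. alpha n A i * (u i)\<^sup>2)"
  define Sv where "Sv = (\<Sum>i<n. alpha n A i * (v i)\<^sup>2)"
  define E where "E = (\<Sum>i<n. alpha n A i * (c * v i - u i)\<^sup>2 * (c * v i + u i))"
  define P where "P = (\<Sum>i<n. alpha n A i * (c\<^sup>2 * (v i)\<^sup>2 * u i))"
  have pos: "0 < u i" "0 < v i" if "i < n" for i
    using ustar vstar that unfolding pos_equilibrium_def by blast+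
  then have "0 < c * v i + u i" if "i < n" for i using that A1(2) by (simp add: add_pos_pos)
  then have E: "E \<ge> 0" and E_eq_0: "E = 0 \<longleftrightarrow> (\<forall>i<n. c * v i = u i)"
    unfolding E_def using sum_weighted_sq_diff_nonneg[of n "alpha n A" "\<lambda>i. c * v i" u] alpha_pos
    by blast+
  have "Su > 0" "Sv > 0" "P > 0"
    unfolding Su_def Sv_def P_def using pos A1(2)
    by (auto intro!: alpha_weighted_sum_pos mult_pos_pos zero_less_power)
  have est: "lu * Su + c ^ 3 * lv * Sv \<le> - E - (1 - b * c) * P"
    using competition_estimate[OF A1(2) ustar vstar] unfolding lu_def lv_def Su_def Sv_def E_def P_def .
  have "0 \<le> (1 - b * c) * P" using A1(3) \<open>P > 0\<close> by simp
  then have le: "lu * Su + c ^ 3 * lv * Sv \<le> - E" using est by linarith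
  have bc: "b * c = 1" if "lu * Su + c ^ 3 * lv * Sv = 0" "E = 0"
  proof -
    have "(1 - b * c) * P \<le> 0" using est that by linarith
    then show ?thesis using \<open>P > 0\<close> A1(3) by (simp add: mult_le_0_iff)
  qed
  have equality: "lu * Su + c ^ 3 * lv * Sv = 0 \<and> E = 0 \<longrightarrow> (\<forall>i<n. u i = c * v i) \<and> b * c = 1"
    using E_eq_0 bc by auto
  have "0 \<le> lv \<and> 0 \<le> lu \<longrightarrow> lv = 0 \<and> lu = 0 \<and> b * c = 1 \<and> (\<forall>i<n. u i = c * v i)"
  proof
    assume "0 \<le> lv \<and> 0 \<le> lu"
    then have "0 \<le> lu * Su" "0 \<le> c ^ 3 * lv * Sv" using \<open>Su > 0\<close> \<open>Sv > 0\<close> A1(2) by simp_all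
    then have "lu * Su = 0" "c ^ 3 * lv * Sv = 0" "E = 0" using le E by linarith+
    then show "lv = 0 \<and> lu = 0 \<and> b * c = 1 \<and> (\<forall>i<n. u i = c * v i)"
      using equality \<open>Su > 0\<close> \<open>Sv > 0\<close> A1(2) by simp
  qed
  moreover have "- E \<le> 0" using E by simp
  ultimately show ?thesis using le equality
    unfolding lu_def[symmetric] lv_def[symmetric] Su_def[symmetric] Sv_def[symmetric] E_def[symmetric]
    by blast
qed

end
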